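(* Let $1\le k\le n-2$ and let $\Sigma=\mathbb{S}^k\times\mathbb{R}^{n-k}\subset\mathbb{R}^{n+1}$ be a self-shrinker, with $r=|\vec x|$ where $\vec x$ are Euclidean coordinates on the $\mathbb{R}^{n-k}$ factor. Then both regions $\{r<\sqrt{2(n-k)}\}$ and $\{r>\sqrt{2(n-k)}\}$ are stable, and $\{r=\sqrt{2(n-k)}\}$ is the unique rotationally symmetric hypersurface of the form $\{r=C\}$, $C>0$, that splits $\Sigma$ into two stable regions $\{r<C\}$ and $\{r>C\}$.
   Context: $\mathbb{S}^k$ is the round sphere of radius $\sqrt{2k}$ centered at the origin of $\mathbb{R}^{k+1}$. Stability operator: $Lf=\Delta f-\tfrac12\langle\vec x,\nabla f\rangle+(|A|^2+\tfrac12)f$. A region $\Omega$ is stable if there exists a function $u$ with $Lu=0$ and $u>0$ on $\Omega$. *)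

theory Defs
  imports "HOL-Analysis.Analysis"
begin

text \<open>Ambient space R^(n+1) = R^(k+1) x R^(n-k), realised as real^'a x real^'b with
  CARD('a) = k+1 and CARD('b) = n-k.  Points are pairs (y, z).\<close>

type_synonym ('a, 'b) pt = "(real ^ 'a) \<times> (real ^ 'b)"

definition kdim :: "('a::finite, 'b::finite) pt itself \<Rightarrow> nat" where
  "kdim _ = CARD('a) - 1"

definition sphR :: "('a::finite, 'b::finite) pt itself \<Rightarrow> real" where
  "sphR T = sqrt (2 * real (kdim T))"

definition Sigma :: "('a::finite, 'b::finite) pt set" where
  "Sigma = {p. norm (fst p) = sphR TYPE(('a,'b) pt)}"

definition rad :: "('a::finite, 'b::finite) pt \<Rightarrow> real" where
  "rad p = norm (snd p)"

text \<open>Nearest-point projection onto Sigma (along the normal lines, which are radial in y).\<close>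
definition proj :: "('a::finite, 'b::finite) pt \<Rightarrow> ('a, 'b) pt" where
  "proj p = ((sphR TYPE(('a,'b) pt) / norm (fst p)) *\<^sub>R fst p, snd p)"

text \<open>Extension of a function on Sigma that is constant along normal lines.\<close>
definition ext :: "(('a::finite, 'b::finite) pt \<Rightarrow> real) \<Rightarrow> ('a, 'b) pt \<Rightarrow> real" where
  "ext u = u \<circ> proj"

definition tube :: "('a::finite, 'b::finite) pt set \<Rightarrow> ('a, 'b) pt set" where
  "tube \<Omega> = {p. fst p \<noteq> 0 \<and> proj p \<in> \<Omega>}"

definition pd :: "('v::real_normed_vector \<Rightarrow> real) \<Rightarrow> 'v \<Rightarrow> 'v \<Rightarrow> real" where
  "pd g v x = deriv (\<lambda>t. g (x + t *\<^sub>R v)) 0"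

definition has_pd :: "('v::real_normed_vector \<Rightarrow> real) \<Rightarrow> 'v \<Rightarrow> 'v \<Rightarrow> bool" where
  "has_pd g v x \<longleftrightarrow> (\<lambda>t. g (x + t *\<^sub>R v)) field_differentiable (at 0)"

definition C2_on :: "'v::euclidean_space set \<Rightarrow> ('v \<Rightarrow> real) \<Rightarrow> bool" where
  "C2_on S g \<longleftrightarrow> open S \<and> continuous_on S g \<and>
     (\<forall>b\<in>Basis. (\<forall>x\<in>S. has_pd g b x) \<and> continuous_on S (pd g b)) \<and>
     (\<forall>b\<in>Basis. \<forall>c\<in>Basis. (\<forall>x\<in>S. has_pd (pd g b) c x) \<and> continuous_on S (pd (pd g b) c))"

definition eLap :: "('v::euclidean_space \<Rightarrow> real) \<Rightarrow> 'v \<Rightarrow> real" where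
  "eLap g x = (\<Sum>b\<in>Basis. pd (pd g b) b x)"

definition pos_grad :: "('v::euclidean_space \<Rightarrow> real) \<Rightarrow> 'v \<Rightarrow> real" where
  "pos_grad g x = (\<Sum>b\<in>Basis. (x \<bullet> b) * pd g b x)"

text \<open>|A|^2 of Sigma: k principal curvatures equal to 1/sqrt(2k), the others 0.\<close>
definition normA2 :: "('a::finite, 'b::finite) pt itself \<Rightarrow> real" where
  "normA2 T = real (kdim T) * (1 / sphR T)\<^sup>2"

text \<open>Stability operator L f = Delta_Sigma f - 1/2 <x, grad f> + (|A|^2 + 1/2) f on Sigma.
  Since ext u is constant along the normal lines of Sigma (and Sigma has constant mean
  curvature along them), Delta_Sigma u = eLap (ext u) on Sigma and grad_Sigma u = grad (ext u).\<close>
definition Lop :: "(('a::finite, 'b::finite) pt \<Rightarrow> real) \<Rightarrow> ('a, 'b) pt \<Rightarrow> real" where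
  "Lop u p = eLap (ext u) p - (1/2) * pos_grad (ext u) p
             + (normA2 TYPE(('a,'b) pt) + 1/2) * u p"

definition stable :: "('a::finite, 'b::finite) pt set \<Rightarrow> bool" where
  "stable \<Omega> \<longleftrightarrow> (\<exists>u. C2_on (tube \<Omega>) (ext u) \<and> (\<forall>p\<in>\<Omega>. Lop u p = 0 \<and> u p > 0))"

end

theory Submission
  imports Defs
begin

text \<open>Write m = n - k and s = r^2. Since |A|^2 = 1/2, the stability operator acts on radial
  functions f(r^2) as the ODE operator 4 s f'' + (2m - s) f' + f. It annihilates 2m - s and
  s - 2m, which are positive on {r < sqrt(2m)} and on {r > sqrt(2m)}: both regions are stable.

  Conversely, a stable region \<Omega> with solution u > 0 carries no radial strict subsolution f
  (positive somewhere, with L f > 0 wherever f > 0) for which {f \<ge> 0} is compact and lies in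
  \<Omega>: scale u until t u touches f(r^2) from above at a point of {f > 0}; there the first
  derivatives agree and the second ones are ordered, so 0 = t L u \<ge> L f(r^2) > 0. For
  C > sqrt(2m) the function a - s with 2m < a < C^2 is such a subsolution in {r < C}, and for
  C < sqrt(2m) so is (s - a)(b - s) in {r > C}, with C^2 < a < 2m and b large.\<close>

lemma DERIV_contact_below:
  fixes g \<psi> g' \<psi>' :: "real \<Rightarrow> real"
  assumes \<delta>: "\<delta> > 0"
    and dg: "\<And>y. \<bar>y - x\<bar> < \<delta> \<Longrightarrow> (g has_real_derivative g' y) (at y)"
    and dg': "(g' has_real_derivative g'') (at x)"
    and d\<psi>: "\<And>y. \<bar>y - x\<bar> < \<delta> \<Longrightarrow> (\<psi> has_real_derivative \<psi>' y) (at y)"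
    and d\<psi>': "(\<psi>' has_real_derivative \<psi>'') (at x)"
    and below: "\<And>y. \<bar>y - x\<bar> < \<delta> \<Longrightarrow> \<psi> y \<le> g y"
    and touch: "\<psi> x = g x"
  shows "\<psi>' x = g' x \<and> \<psi>'' \<le> g''"
proof -
  define \<phi> where "\<phi> y = g y - \<psi> y" for y
  have d\<phi>: "(\<phi> has_real_derivative g' y - \<psi>' y) (at y)" if "\<bar>y - x\<bar> < \<delta>" for y
    unfolding \<phi>_def[abs_def] using dg[OF that] d\<psi>[OF that] by (rule DERIV_diff)
  have first: "g' x - \<psi>' x = 0"
    by (rule DERIV_local_min[OF d\<phi> \<delta>]) (use \<delta> below touch in \<open>auto simp: \<phi>_def abs_minus_commute\<close>)
  have "\<psi>'' \<le> g''"
  proof (rule ccontr)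
    assume "\<not> \<psi>'' \<le> g''"
    then have "g'' - \<psi>'' < 0" by simp
    from DERIV_neg_dec_right[OF DERIV_diff[OF dg' d\<psi>'] this] obtain d where d: "d > 0"
      and dec: "\<And>h. 0 < h \<Longrightarrow> h < d \<Longrightarrow> g' (x + h) - \<psi>' (x + h) < g' x - \<psi>' x"
      by blast
    define h where "h = min d \<delta> / 2"
    have h: "0 < h" "h < d" "h < \<delta>" using d \<delta> by (auto simp: h_def)
    obtain z where z: "x < z" "z < x + h" and mvt: "\<phi> (x + h) - \<phi> x = h * (g' z - \<psi>' z)"
      using MVT2[of x "x + h" \<phi> "\<lambda>y. g' y - \<psi>' y"] d\<phi> h by auto
    have "g' z - \<psi>' z < 0"
      using dec[of "z - x"] z h first by auto
    then have "h * (g' z - \<psi>' z) < 0" by (rule mult_pos_neg[OF h(1)])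
    then have "\<phi> (x + h) < \<phi> x" using mvt by simp
    moreover have "\<phi> x \<le> \<phi> (x + h)" using below[of "x + h"] touch h by (simp add: \<phi>_def)
    ultimately show False by simp
  qed
  with first show ?thesis by simp
qed

lemma has_pd_pdI:
  assumes "((\<lambda>t. g (x + t *\<^sub>R v)) has_real_derivative D) (at 0)"
  shows "has_pd g v x" and "pd g v x = D"
  using assms DERIV_imp_deriv
  by (auto simp: has_pd_def pd_def real_differentiable_def field_differentiable_def)

lemma has_pd_line_derivative:
  assumes "has_pd g v (x + h *\<^sub>R v)"
  shows "((\<lambda>s. g (x + s *\<^sub>R v)) has_real_derivative pd g v (x + h *\<^sub>R v)) (at h)"
proof -
  have "((\<lambda>s. g (x + h *\<^sub>R v + s *\<^sub>R v)) has_real_derivative pd g v (x + h *\<^sub>R v)) (at 0)"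
    using assms unfolding has_pd_def pd_def by (simp add: DERIV_deriv_iff_field_differentiable)
  then have "((\<lambda>s. g (x + (s + h) *\<^sub>R v)) has_real_derivative pd g v (x + h *\<^sub>R v)) (at 0)"
    by (simp add: scaleR_add_left add_ac)
  then show ?thesis using DERIV_shift[of "\<lambda>s. g (x + s *\<^sub>R v)" _ 0 h] by simp
qed

lemma pd_contact_below:
  fixes g \<psi> :: "'v::real_normed_vector \<Rightarrow> real"
  assumes \<delta>: "\<delta> > 0"
    and g: "\<And>h. \<bar>h\<bar> < \<delta> \<Longrightarrow> has_pd g v (x + h *\<^sub>R v)" "has_pd (pd g v) v x"
    and \<psi>: "\<And>h. \<bar>h\<bar> < \<delta> \<Longrightarrow> has_pd \<psi> v (x + h *\<^sub>R v)" "has_pd (pd \<psi> v) v x"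
    and below: "\<And>h. \<bar>h\<bar> < \<delta> \<Longrightarrow> \<psi> (x + h *\<^sub>R v) \<le> t * g (x + h *\<^sub>R v)"
    and touch: "\<psi> x = t * g x"
  shows "pd \<psi> v x = t * pd g v x \<and> pd (pd \<psi> v) v x \<le> t * pd (pd g v) v x"
proof -
  have "pd \<psi> v (x + 0 *\<^sub>R v) = t * pd g v (x + 0 *\<^sub>R v)
      \<and> pd (pd \<psi> v) v x \<le> t * pd (pd g v) v x"
  proof (rule DERIV_contact_below[OF \<delta>, where x = 0 and g = "\<lambda>h. t * g (x + h *\<^sub>R v)"
        and g' = "\<lambda>h. t * pd g v (x + h *\<^sub>R v)" and \<psi> = "\<lambda>h. \<psi> (x + h *\<^sub>R v)"
        and \<psi>' = "\<lambda>h. pd \<psi> v (x + h *\<^sub>R v)"])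
    show "((\<lambda>h. t * g (x + h *\<^sub>R v)) has_real_derivative t * pd g v (x + y *\<^sub>R v)) (at y)"
      if "\<bar>y - 0\<bar> < \<delta>" for y
      using has_pd_line_derivative[OF g(1)] that by (auto intro: DERIV_cmult)
    show "((\<lambda>h. t * pd g v (x + h *\<^sub>R v)) has_real_derivative t * pd (pd g v) v x) (at 0)"
      using has_pd_line_derivative[of "pd g v" v x 0] g(2) by (auto intro: DERIV_cmult)
    show "((\<lambda>h. \<psi> (x + h *\<^sub>R v)) has_real_derivative pd \<psi> v (x + y *\<^sub>R v)) (at y)"
      if "\<bar>y - 0\<bar> < \<delta>" for y
      using has_pd_line_derivative[OF \<psi>(1)] that by auto
    show "((\<lambda>h. pd \<psi> v (x + h *\<^sub>R v)) has_real_derivative pd (pd \<psi> v) v x) (at 0)"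
      using has_pd_line_derivative[of "pd \<psi> v" v x 0] \<psi>(2) by simp
  qed (use below touch in auto)
  then show ?thesis by simp
qed

lemma sum_Basis_prod:
  fixes f :: "'a::euclidean_space \<times> 'b::euclidean_space \<Rightarrow> 'c::comm_monoid_add"
  shows "sum f Basis = (\<Sum>i\<in>Basis. f (i, 0)) + (\<Sum>j\<in>Basis. f (0, j))"
proof -
  have "inj_on (\<lambda>i. (i::'a, 0::'b)) Basis" "inj_on (\<lambda>j. (0::'a, j::'b)) Basis"
    by (auto intro!: inj_onI)
  then show ?thesis
    unfolding Basis_prod_def by (subst sum.union_disjoint) (auto simp: sum.reindex)
qed

lemma has_real_derivative_norm_line_squared:
  fixes z c :: "'a::real_inner"
  shows "((\<lambda>h. (norm (z + h *\<^sub>R c))\<^sup>2) has_real_derivative 2 * (z \<bullet> c) + 2 * h * (c \<bullet> c)) (at h)"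
proof -
  have "(norm (z + h *\<^sub>R c))\<^sup>2 = z \<bullet> z + 2 * h * (z \<bullet> c) + h\<^sup>2 * (c \<bullet> c)" for h
    unfolding power2_norm_eq_inner
    by (simp add: inner_add inner_commute power2_eq_square algebra_simps)
  then show ?thesis
    by (auto intro!: derivative_eq_intros simp: power2_eq_square algebra_simps)
qed

definition radial :: "(real \<Rightarrow> real) \<Rightarrow> 'a \<times> 'b::real_normed_vector \<Rightarrow> real" where
  "radial f q = f ((norm (snd q))\<^sup>2)"

lemma sphR_pos: "CARD('a) \<ge> 2 \<Longrightarrow> sphR TYPE(('a::finite, 'b::finite) pt) > 0"
  by (simp add: sphR_def kdim_def)

lemma normA2_eq_half: "CARD('a) \<ge> 2 \<Longrightarrow> normA2 TYPE(('a::finite, 'b::finite) pt) = 1/2"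
  by (simp add: normA2_def sphR_def kdim_def power_divide)

lemma snd_proj [simp]: "snd (proj p) = snd p"
  by (simp add: proj_def)

lemma radial_proj [simp]: "radial f (proj p) = radial f p"
  by (simp add: radial_def)

lemma radial_eq_rad: "radial f p = f ((rad p)\<^sup>2)"
  by (simp add: radial_def rad_def)

lemma ext_radial: "ext (radial f) = radial f"
  by (simp add: ext_def comp_def fun_eq_iff)

lemma rad_less_iff:
  assumes "0 \<le> C"
  shows "rad p < C \<longleftrightarrow> (rad p)\<^sup>2 < C\<^sup>2" and "C < rad p \<longleftrightarrow> C\<^sup>2 < (rad p)\<^sup>2"
  using assms power_mono_iff[of "rad p" C 2] power_mono_iff[of C "rad p" 2]
  by (auto simp: rad_def not_le[symmetric])

context
  assumes card: "CARD('a::finite) \<ge> 2"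
begin

lemma Sigma_fst_nonzero: "p \<in> (Sigma :: ('a, 'b::finite) pt set) \<Longrightarrow> fst p \<noteq> 0"
  using sphR_pos[OF card, where 'b='b] by (auto simp: Sigma_def)

lemma proj_in_Sigma: "fst (p :: ('a, 'b::finite) pt) \<noteq> 0 \<Longrightarrow> proj p \<in> Sigma"
  using sphR_pos[OF card, where 'b='b] by (simp add: proj_def Sigma_def)

lemma proj_Sigma: "p \<in> (Sigma :: ('a, 'b::finite) pt set) \<Longrightarrow> proj p = p"
  using sphR_pos[OF card, where 'b='b] by (cases p) (simp add: proj_def Sigma_def)

lemma ext_Sigma: "p \<in> (Sigma :: ('a, 'b::finite) pt set) \<Longrightarrow> ext u p = u p"
  by (simp add: ext_def proj_Sigma)

lemma Sigma_Int_subset_tube: "(Sigma :: ('a, 'b::finite) pt set) \<inter> \<Omega> \<subseteq> tube \<Omega>"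
proof
  fix p assume "p \<in> Sigma \<inter> \<Omega>"
  then show "p \<in> tube \<Omega>"
    using Sigma_fst_nonzero[of p] proj_Sigma[of p] by (simp add: tube_def)
qed

lemma Sigma_rad_surj:
  assumes "0 \<le> r"
  shows "\<exists>p \<in> (Sigma :: ('a, 'b::finite) pt set). rad p = r"
proof -
  obtain e :: "real^'a" and e' :: "real^'b" where e: "e \<in> Basis" "e' \<in> Basis"
    using nonempty_Basis by (meson ex_in_conv)
  define p :: "('a, 'b) pt" where "p = (sphR TYPE(('a, 'b) pt) *\<^sub>R e, r *\<^sub>R e')"
  have "p \<in> Sigma \<and> rad p = r"
    unfolding p_def using sphR_pos[OF card, where 'b='b] assms e by (simp add: Sigma_def rad_def)
  then show ?thesis by blast
qed

lemma open_tube_radial_region: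
  assumes "open {r. P r}"
  shows "open (tube {p \<in> (Sigma :: ('a, 'b::finite) pt set). P (rad p)})"
proof -
  have "tube {p \<in> (Sigma :: ('a, 'b) pt set). P (rad p)}
      = {p. fst p \<noteq> 0} \<inter> (\<lambda>p. norm (snd p)) -` {r. P r}"
    using proj_in_Sigma by (auto simp: tube_def rad_def)
  also have "open \<dots>"
    using assms by (intro open_Int open_Collect_neq continuous_open_vimage continuous_intros) auto
  finally show ?thesis .
qed

end

lemma compact_touching_multiple:
  fixes g u :: "'a::topological_space \<Rightarrow> real"
  assumes "compact K" "continuous_on K g" "continuous_on K u" "\<And>q. q \<in> K \<Longrightarrow> u q > 0"
    and "q1 \<in> K" "g q1 > 0"
  obtains t p0 where "t > 0" "p0 \<in> K" "g p0 = t * u p0" "\<And>q. q \<in> K \<Longrightarrow> g q \<le> t * u q"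
proof -
  have "continuous_on K (\<lambda>q. g q / u q)"
    using assms(2,3) by (rule continuous_on_divide) (use assms(4) in force)
  then obtain p0 where p0: "p0 \<in> K" and max: "\<And>q. q \<in> K \<Longrightarrow> g q / u q \<le> g p0 / u p0"
    using continuous_attains_sup[OF assms(1)] assms(5) by blast
  have "0 < g q1 / u q1" using assms(4-6) by simp
  then have "0 < g p0 / u p0" using max[OF assms(5)] by linarith
  moreover have "g q \<le> g p0 / u p0 * u q" if "q \<in> K" for q
    using max[OF that] assms(4)[OF that] by (simp add: pos_divide_le_eq)
  ultimately show ?thesis using that p0 assms(4)[OF p0] by simp
qed

context
  fixes f f' f'' :: "real \<Rightarrow> real"
  assumes df: "\<And>s. (f has_real_derivative f' s) (at s)"
    and df': "\<And>s. (f' has_real_derivative f'' s) (at s)"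
begin

lemma has_pd_radial:
  fixes x v :: "'a::real_normed_vector \<times> 'b::real_inner"
  shows "has_pd (radial f) v x"
    and "pd (radial f) v x = 2 * f' ((norm (snd x))\<^sup>2) * (snd x \<bullet> snd v)"
proof -
  have "((\<lambda>h. radial f (x + h *\<^sub>R v)) has_real_derivative
      f' ((norm (snd x))\<^sup>2) * (2 * (snd x \<bullet> snd v))) (at 0)"
    unfolding radial_def
    using DERIV_chain2[OF df has_real_derivative_norm_line_squared[of "snd x" "snd v" 0]] by simp
  then show "has_pd (radial f) v x" "pd (radial f) v x = 2 * f' ((norm (snd x))\<^sup>2) * (snd x \<bullet> snd v)"
    by (auto dest: has_pd_pdI)
qed

lemma has_pd_pd_radial:
  fixes x v w :: "'a::real_normed_vector \<times> 'b::real_inner"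
  defines "s \<equiv> (norm (snd x))\<^sup>2"
  shows "has_pd (pd (radial f) v) w x"
    and "pd (pd (radial f) v) w x
      = 4 * f'' s * (snd x \<bullet> snd v) * (snd x \<bullet> snd w) + 2 * f' s * (snd v \<bullet> snd w)"
proof -
  have "((\<lambda>h. 2 * f' ((norm (snd x + h *\<^sub>R snd w))\<^sup>2) * ((snd x + h *\<^sub>R snd w) \<bullet> snd v))
      has_real_derivative 2 * (f'' s * (2 * (snd x \<bullet> snd w))) * (snd x \<bullet> snd v)
        + 2 * f' s * (snd w \<bullet> snd v)) (at 0)"
    using DERIV_chain2[OF df' has_real_derivative_norm_line_squared[of "snd x" "snd w" 0]]
    by (auto intro!: derivative_eq_intros simp: s_def inner_add_left)
  then have "((\<lambda>h. pd (radial f) v (x + h *\<^sub>R w)) has_real_derivative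
      4 * f'' s * (snd x \<bullet> snd v) * (snd x \<bullet> snd w) + 2 * f' s * (snd v \<bullet> snd w)) (at 0)"
    by (simp add: has_pd_radial(2) inner_commute algebra_simps)
  then show "has_pd (pd (radial f) v) w x"
    "pd (pd (radial f) v) w x
      = 4 * f'' s * (snd x \<bullet> snd v) * (snd x \<bullet> snd w) + 2 * f' s * (snd v \<bullet> snd w)"
    by (auto dest: has_pd_pdI)
qed

lemma continuous_on_radial: "continuous_on S (radial f)"
proof -
  have "continuous_on UNIV f"
    using df by (auto intro!: continuous_at_imp_continuous_on DERIV_isCont)
  then show ?thesis
    unfolding radial_def[abs_def]
    by (rule continuous_on_compose2) (auto intro!: continuous_intros)
qed

lemma C2_on_radial:
  fixes S :: "('a::euclidean_space \<times> 'b::euclidean_space) set"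
  assumes "open S" and "continuous_on UNIV f''"
  shows "C2_on S (radial f)"
proof -
  have "continuous_on UNIV f" "continuous_on UNIV f'"
    using df df' by (auto intro!: continuous_at_imp_continuous_on DERIV_isCont)
  moreover have "continuous_on S (\<lambda>x. g ((norm (snd x))\<^sup>2))" if "continuous_on UNIV g" for g
    by (rule continuous_on_compose2[OF that]) (auto intro!: continuous_intros)
  ultimately have cont: "continuous_on S (\<lambda>x. g ((norm (snd x))\<^sup>2))" if "g \<in> {f, f', f''}" for g
    using that assms(2) by blast
  have pd1: "pd (radial f) v = (\<lambda>x. 2 * f' ((norm (snd x))\<^sup>2) * (snd x \<bullet> snd v))" for v
    using has_pd_radial(2) by blast
  have pd2: "pd (pd (radial f) v) w = (\<lambda>x. 4 * f'' ((norm (snd x))\<^sup>2) * (snd x \<bullet> snd v)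
      * (snd x \<bullet> snd w) + 2 * f' ((norm (snd x))\<^sup>2) * (snd v \<bullet> snd w))" for v w
    using has_pd_pd_radial(2) by blast
  have "continuous_on S (pd (radial f) v)" for v
    unfolding pd1 using cont by (auto intro!: continuous_intros)
  moreover have "continuous_on S (pd (pd (radial f) v) w)" for v w
    unfolding pd2 using cont by (auto intro!: continuous_intros)
  moreover have "continuous_on S (radial f)"
    using cont unfolding radial_def[abs_def] by simp
  ultimately show ?thesis
    unfolding C2_on_def using assms(1) by (simp add: has_pd_radial has_pd_pd_radial(1))
qed

lemma eLap_radial:
  fixes x :: "'a::euclidean_space \<times> 'b::euclidean_space"
  defines "s \<equiv> (norm (snd x))\<^sup>2"
  shows "eLap (radial f) x = 4 * s * f'' s + 2 * real DIM('b) * f' s"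
proof -
  have "eLap (radial f) x = (\<Sum>j\<in>Basis. 4 * f'' s * (snd x \<bullet> j) * (snd x \<bullet> j) + 2 * f' s)"
    by (simp add: eLap_def has_pd_pd_radial s_def sum_Basis_prod)
  also have "\<dots> = 4 * f'' s * (\<Sum>j\<in>Basis. (snd x \<bullet> j) * (snd x \<bullet> j)) + 2 * real DIM('b) * f' s"
    by (simp add: sum.distrib sum_distrib_left mult.assoc)
  finally show ?thesis
    by (simp add: s_def power2_norm_eq_inner euclidean_inner[of "snd x" "snd x", symmetric])
qed

lemma pos_grad_radial:
  fixes x :: "'a::euclidean_space \<times> 'b::euclidean_space"
  shows "pos_grad (radial f) x = 2 * (norm (snd x))\<^sup>2 * f' ((norm (snd x))\<^sup>2)"
  by (simp add: pos_grad_def has_pd_radial sum_Basis_prod inner_Pair_0 power2_norm_eq_inner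
      euclidean_inner[of "snd x" "snd x"] sum_distrib_left algebra_simps)

lemma compact_Sigma_radial_nonneg:
  assumes "\<And>s. 0 \<le> s \<Longrightarrow> 0 \<le> f s \<Longrightarrow> s \<le> R"
  shows "compact {p \<in> (Sigma :: ('a::finite, 'b::finite) pt set). 0 \<le> radial f p}"
    (is "compact ?K")
proof (rule compact_eq_bounded_closed[THEN iffD2], rule conjI)
  have "norm p \<le> sphR TYPE(('a, 'b) pt) + sqrt R" if "p \<in> ?K" for p
  proof -
    have "norm (snd p) \<le> sqrt R"
      using assms[of "(norm (snd p))\<^sup>2"] that by (auto simp: radial_def real_le_rsqrt)
    then show ?thesis
      using that norm_Pair_le[of "fst p" "snd p"] by (auto simp: Sigma_def)
  qed
  then show "bounded ?K" unfolding bounded_iff by blast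
  show "closed ?K"
    unfolding Sigma_def mem_Collect_eq
    by (intro closed_Collect_conj closed_Collect_eq closed_Collect_le continuous_on_radial
        continuous_intros)
qed

lemma Lop_radial:
  fixes p :: "('a::finite, 'b::finite) pt"
  assumes "CARD('a) \<ge> 2"
  defines "s \<equiv> (rad p)\<^sup>2"
  shows "Lop (radial f) p = 4 * s * f'' s + (2 * real CARD('b) - s) * f' s + f s"
  using df df' unfolding Lop_def ext_radial
  by (simp add: eLap_radial pos_grad_radial normA2_eq_half[OF assms(1), where 'b='b]
      s_def rad_def radial_def algebra_simps)

lemma stable_radialI:
  fixes \<Omega> :: "('a::finite, 'b::finite) pt set"
  assumes card: "CARD('a) \<ge> 2" and "continuous_on UNIV f''" and "open (tube \<Omega>)"
    and ode: "\<And>s. 4 * s * f'' s + (2 * real CARD('b) - s) * f' s + f s = 0"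
    and pos: "\<And>p. p \<in> \<Omega> \<Longrightarrow> f ((rad p)\<^sup>2) > 0"
  shows "stable \<Omega>"
  unfolding stable_def
proof (intro exI conjI ballI)
  show "C2_on (tube \<Omega>) (ext (radial f))"
    unfolding ext_radial by (rule C2_on_radial[OF assms(3,2)])
  show "Lop (radial f) p = 0" "radial f p > 0" if "p \<in> \<Omega>" for p
    using Lop_radial[OF card, where 'b='b] ode pos[OF that] by (simp_all add: radial_def rad_def)
qed

lemma Lop_radial_le_at_contact:
  fixes u :: "('a::finite, 'b::finite) pt \<Rightarrow> real"
  assumes card: "CARD('a) \<ge> 2" and p0: "p0 \<in> Sigma"
    and C2: "C2_on S (ext u)" and "\<delta> > 0" and ball: "ball p0 \<delta> \<subseteq> S"
    and below: "\<And>q. q \<in> ball p0 \<delta> \<Longrightarrow> radial f q \<le> t * ext u q"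
    and touch: "radial f p0 = t * u p0"
  shows "Lop (radial f) p0 \<le> t * Lop u p0"
proof -
  have contact: "pd (radial f) b p0 = t * pd (ext u) b p0
      \<and> pd (pd (radial f) b) b p0 \<le> t * pd (pd (ext u) b) b p0" if b: "b \<in> Basis" for b
  proof (rule pd_contact_below[OF \<open>\<delta> > 0\<close>])
    have line: "p0 + h *\<^sub>R b \<in> ball p0 \<delta>" if "\<bar>h\<bar> < \<delta>" for h
      using that b by (simp add: dist_norm)
    then have in_S: "p0 + h *\<^sub>R b \<in> S" if "\<bar>h\<bar> < \<delta>" for h
      using that ball by blast
    then show "has_pd (ext u) b (p0 + h *\<^sub>R b)" if "\<bar>h\<bar> < \<delta>" for h
      using that C2 b unfolding C2_on_def by blast
    show "has_pd (pd (ext u) b) b p0"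
      using in_S[of 0] \<open>\<delta> > 0\<close> C2 b unfolding C2_on_def by simp
    show "radial f (p0 + h *\<^sub>R b) \<le> t * ext u (p0 + h *\<^sub>R b)" if "\<bar>h\<bar> < \<delta>" for h
      using below line that by blast
    show "radial f p0 = t * ext u p0"
      using touch ext_Sigma[OF card p0] by simp
  qed (auto simp: has_pd_radial has_pd_pd_radial)
  have "eLap (radial f) p0 \<le> t * eLap (ext u) p0"
    unfolding eLap_def sum_distrib_left by (rule sum_mono) (use contact in auto)
  moreover have "pos_grad (radial f) p0 = t * pos_grad (ext u) p0"
    unfolding pos_grad_def sum_distrib_left by (rule sum.cong) (use contact in auto)
  ultimately show ?thesis
    unfolding Lop_def ext_radial touch by (simp add: algebra_simps)
qed

lemma not_stable_if_radial_subsolution: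
  fixes \<Omega> :: "('a::finite, 'b::finite) pt set"
  assumes card: "CARD('a) \<ge> 2"
    and sub: "\<And>s. 0 \<le> s \<Longrightarrow> 0 < f s \<Longrightarrow> 0 < 4 * s * f'' s + (2 * real CARD('b) - s) * f' s + f s"
    and bounded: "\<And>s. 0 \<le> s \<Longrightarrow> 0 \<le> f s \<Longrightarrow> s \<le> R"
    and pos: "0 \<le> \<sigma>" "0 < f \<sigma>"
    and \<Omega>: "{p \<in> Sigma. 0 \<le> radial f p} \<subseteq> \<Omega>"
  shows "\<not> stable \<Omega>"
proof
  assume "stable \<Omega>"
  then obtain u where C2: "C2_on (tube \<Omega>) (ext u)"
    and Lu: "\<And>p. p \<in> \<Omega> \<Longrightarrow> Lop u p = 0" and u_pos: "\<And>p. p \<in> \<Omega> \<Longrightarrow> u p > 0"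
    unfolding stable_def by blast
  define K where "K = {p \<in> (Sigma :: ('a, 'b) pt set). 0 \<le> radial f p}"
  have "K \<subseteq> \<Omega>" using \<Omega> by (simp add: K_def)
  then have K_tube: "K \<subseteq> tube \<Omega>"
    using Sigma_Int_subset_tube[OF card] by (auto simp: K_def)
  have "compact K"
    unfolding K_def using bounded by (rule compact_Sigma_radial_nonneg)
  have u_pos_K: "\<And>q. q \<in> K \<Longrightarrow> u q > 0" using u_pos \<open>K \<subseteq> \<Omega>\<close> by blast
  have cont_u: "continuous_on K u"
  proof (rule continuous_on_eq)
    show "continuous_on K (ext u)"
      using C2 K_tube continuous_on_subset by (auto simp: C2_on_def)
  qed (simp add: K_def ext_Sigma[OF card])
  obtain p1 :: "('a, 'b) pt" where "p1 \<in> Sigma" "rad p1 = sqrt \<sigma>"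
    using Sigma_rad_surj[OF card] pos(1) by (meson real_sqrt_ge_zero)
  then have p1: "p1 \<in> K" "radial f p1 > 0"
    using pos by (simp_all add: K_def radial_eq_rad)
  obtain t p0 where "t > 0" and p0: "p0 \<in> K" and touch: "radial f p0 = t * u p0"
    and below_K: "\<And>q. q \<in> K \<Longrightarrow> radial f q \<le> t * u q"
    using compact_touching_multiple[OF \<open>compact K\<close> continuous_on_radial cont_u u_pos_K p1] by blast
  have p0_Sigma: "p0 \<in> Sigma" using p0 by (simp add: K_def)
  define U where "U = {q. fst q \<noteq> 0 \<and> 0 < radial f q} \<inter> tube \<Omega>"
  have "open U"
    using C2 unfolding U_def C2_on_def
    by (intro open_Int open_Collect_conj open_Collect_neq open_Collect_less continuous_on_radial
        continuous_intros) auto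
  moreover have "p0 \<in> U"
    using Sigma_fst_nonzero[OF card p0_Sigma] touch \<open>t > 0\<close> u_pos[of p0] \<open>K \<subseteq> \<Omega>\<close> p0 K_tube
    by (auto simp: U_def)
  ultimately obtain \<delta> where "\<delta> > 0" and ball: "ball p0 \<delta> \<subseteq> U"
    by (meson open_contains_ball)
  have below: "radial f q \<le> t * ext u q" if "q \<in> ball p0 \<delta>" for q
  proof -
    have "fst q \<noteq> 0" "0 < radial f q" using ball that by (auto simp: U_def)
    then have "proj q \<in> K" using proj_in_Sigma[OF card] by (simp add: K_def)
    then show ?thesis using below_K[of "proj q"] by (simp add: ext_def)
  qed
  have "ball p0 \<delta> \<subseteq> tube \<Omega>" using ball by (simp add: U_def)
  have "Lop (radial f) p0 \<le> t * Lop u p0"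
    by (rule Lop_radial_le_at_contact[OF card p0_Sigma C2 \<open>\<delta> > 0\<close> \<open>ball p0 \<delta> \<subseteq> tube \<Omega>\<close> below touch])
  moreover have "Lop u p0 = 0" using Lu \<open>K \<subseteq> \<Omega>\<close> p0 by blast
  moreover have "0 < f ((rad p0)\<^sup>2)"
    using touch \<open>t > 0\<close> u_pos[of p0] \<open>K \<subseteq> \<Omega>\<close> p0 by (auto simp: radial_def rad_def)
  then have "Lop (radial f) p0 > 0"
    using sub[of "(rad p0)\<^sup>2"] by (simp add: Lop_radial[OF card])
  ultimately show False by simp
qed

end

context
  fixes m :: real
  assumes card: "CARD('a::finite) \<ge> 2" and m: "m = real CARD('b::finite)"
begin

lemma stable_inner_region: "stable {p \<in> (Sigma :: ('a, 'b) pt set). rad p < sqrt (2 * m)}"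
proof (rule stable_radialI[where f = "\<lambda>s. 2 * m - s" and f' = "\<lambda>_. -1" and f'' = "\<lambda>_. 0",
      OF _ _ card])
  show "open (tube {p \<in> (Sigma :: ('a, 'b) pt set). rad p < sqrt (2 * m)})"
    by (rule open_tube_radial_region[OF card]) (simp add: open_Collect_less)
  show "0 < 2 * m - (rad p)\<^sup>2" if "p \<in> {p \<in> Sigma. rad p < sqrt (2 * m)}" for p
    using that rad_less_iff(1)[of "sqrt (2 * m)" p] m by simp
qed (auto intro!: derivative_eq_intros simp: m)

lemma stable_outer_region: "stable {p \<in> (Sigma :: ('a, 'b) pt set). sqrt (2 * m) < rad p}"
proof (rule stable_radialI[where f = "\<lambda>s. s - 2 * m" and f' = "\<lambda>_. 1" and f'' = "\<lambda>_. 0",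
      OF _ _ card])
  show "open (tube {p \<in> (Sigma :: ('a, 'b) pt set). sqrt (2 * m) < rad p})"
    by (rule open_tube_radial_region[OF card]) (simp add: open_Collect_less)
  show "0 < (rad p)\<^sup>2 - 2 * m" if "p \<in> {p \<in> Sigma. sqrt (2 * m) < rad p}" for p
    using that rad_less_iff(2)[of "sqrt (2 * m)" p] m by simp
qed (auto intro!: derivative_eq_intros simp: m)

lemma not_stable_inner_region:
  assumes "sqrt (2 * m) < C"
  shows "\<not> stable {p \<in> (Sigma :: ('a, 'b) pt set). rad p < C}"
proof -
  have "2 * m < C\<^sup>2"
    using power_strict_mono[OF assms real_sqrt_ge_zero, of 2] m by simp
  have "0 \<le> C"
    using assms real_sqrt_ge_zero[of "2 * m"] m by linarith
  define a where "a = (2 * m + C\<^sup>2) / 2"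
  show ?thesis
  proof (rule not_stable_if_radial_subsolution[where f = "\<lambda>s. a - s" and f' = "\<lambda>_. -1"
        and f'' = "\<lambda>_. 0" and R = a and \<sigma> = 0, OF _ _ card])
    show "{p \<in> Sigma. 0 \<le> radial (\<lambda>s. a - s) p} \<subseteq> {p \<in> (Sigma :: ('a, 'b) pt set). rad p < C}"
      using \<open>2 * m < C\<^sup>2\<close> by (auto simp: radial_eq_rad a_def rad_less_iff(1)[OF \<open>0 \<le> C\<close>])
  qed (use \<open>2 * m < C\<^sup>2\<close> m in \<open>auto intro!: derivative_eq_intros simp: a_def\<close>)
qed

lemma not_stable_outer_region:
  assumes "0 < C" "C < sqrt (2 * m)"
  shows "\<not> stable {p \<in> (Sigma :: ('a, 'b) pt set). C < rad p}"
proof -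
  have "C\<^sup>2 < 2 * m"
    using assms m real_sqrt_less_iff[of "C\<^sup>2" "2 * m"] by simp
  define a where "a = (2 * m + C\<^sup>2) / 2"
  have a: "C\<^sup>2 < a" "a < 2 * m" "0 \<le> a"
    using \<open>C\<^sup>2 < 2 * m\<close> m by (auto simp: a_def)
  define b where "b = (4 + 2 * m)\<^sup>2 / (2 * m - a) + a + 1"
  have "0 \<le> (4 + 2 * m)\<^sup>2 / (2 * m - a)" using a by simp
  then have "a < b" by (simp add: b_def)
  have "b * (2 * m - a) = (4 + 2 * m)\<^sup>2 + (a + 1) * (2 * m - a)"
    using a by (simp add: b_def field_simps)
  moreover have "0 < (a + 1) * (2 * m - a)"
    using a by simp
  ultimately have "(4 + 2 * m)\<^sup>2 < b * (2 * m - a)"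
    by linarith
  have L: "4 * s * -2 + (2 * m - s) * (a + b - 2 * s) + (s - a) * (b - s)
      = (s - (4 + 2 * m))\<^sup>2 + (b * (2 * m - a) - (4 + 2 * m)\<^sup>2) + 2 * m * a" for s
    by (simp add: power2_eq_square algebra_simps)
  show ?thesis
  proof (rule not_stable_if_radial_subsolution[where f = "\<lambda>s. (s - a) * (b - s)"
        and f' = "\<lambda>s. a + b - 2 * s" and f'' = "\<lambda>_. -2" and R = b and \<sigma> = "(a + b) / 2",
        OF _ _ card])
    show "0 < 4 * s * -2 + (2 * real CARD('b) - s) * (a + b - 2 * s) + (s - a) * (b - s)" for s
      unfolding m[symmetric] L using \<open>(4 + 2 * m)\<^sup>2 < b * (2 * m - a)\<close> a m
      by (intro add_pos_nonneg add_nonneg_pos) auto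
    show "{p \<in> Sigma. 0 \<le> radial (\<lambda>s. (s - a) * (b - s)) p}
        \<subseteq> {p \<in> (Sigma :: ('a, 'b) pt set). C < rad p}"
      using a \<open>a < b\<close>
      by (auto simp: radial_eq_rad zero_le_mult_iff rad_less_iff(2)[OF less_imp_le[OF assms(1)]])
    show "s \<le> b" if "0 \<le> s" "0 \<le> (s - a) * (b - s)" for s
      using that \<open>a < b\<close> by (auto simp: zero_le_mult_iff)
    show "0 < ((a + b) / 2 - a) * (b - (a + b) / 2)"
      using \<open>a < b\<close> by (intro mult_pos_pos) auto
  qed (use a \<open>a < b\<close> in \<open>auto intro!: derivative_eq_intros simp: algebra_simps\<close>)
qed

end

theorem proposition4p12:
  assumes "CARD('a::finite) \<ge> 2" and "CARD('b::finite) \<ge> 2"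
  shows "stable {p \<in> (Sigma :: ('a, 'b) pt set). rad p < sqrt (2 * real CARD('b))}
       \<and> stable {p \<in> (Sigma :: ('a, 'b) pt set). rad p > sqrt (2 * real CARD('b))}
       \<and> (\<forall>C>0. stable {p \<in> (Sigma :: ('a, 'b) pt set). rad p < C}
                \<and> stable {p \<in> (Sigma :: ('a, 'b) pt set). rad p > C}
                \<longrightarrow> C = sqrt (2 * real CARD('b)))"
proof -
  have "C = sqrt (2 * real CARD('b))"
    if "C > 0" "stable {p \<in> (Sigma :: ('a, 'b) pt set). rad p < C}"
      "stable {p \<in> (Sigma :: ('a, 'b) pt set). rad p > C}" for C
    using not_stable_inner_region[OF assms(1) refl, of C]
      not_stable_outer_region[OF assms(1) refl, of C] that by (cases "C < sqrt (2 * real CARD('b))") (auto simp: not_less le_less)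
  then show ?thesis
    using stable_inner_region[OF assms(1) refl] stable_outer_region[OF assms(1) refl] by blast
qed

end
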